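(* In every run of the algorithm described in the context, no correct process blocks forever in the initial wait statement "wait until $b=(w\_sync_i[j]+1)\bmod 2$" of the handler for a received message $\textsc{write}(b,v)$.
   Context: Model. There are $n$ asynchronous processes $p_1,\dots,p_n$, of which up to $t<n/2$ may crash; a process runs its algorithm correctly until it crashes, and a process that never crashes is correct. Each ordered pair of processes is linked by a reliable (no loss, corruption, duplication or creation; every message sent to a correct process is eventually received), asynchronous, not necessarily FIFO channel. $p_w$ is the single writer, invoking writes sequentially; $v_0$ is the initial value. Messages: $\textsc{write}(b,v)$ with $b\in\{0,1\}$, which stands for the two types $\textsc{write0}(v)$ and $\textsc{write1}(v)$; $\textsc{read}()$; $\textsc{proceed}()$. Variables of $p_i$. These are: $history_i$ with $history_i[0]=v_0$; $w\_sync_i[1..n]$, initially all $0$; $r\_sync_i[1..n]$, initially all $0$. $\mathsf{write}(v)$ by $p_w$: $wsn\gets w\_sync_w[w]+1$; $w\_sync_w[w]\gets wsn$; $history_w[wsn]\gets v$. Send $\textsc{write}(wsn\bmod 2,v)$ to each $p_j$ with $w\_sync_w[j]=wsn-1$. Wait until at least $n-t$ indices $j$ have $w\_sync_w[j]=wsn$. Return. $\mathsf{read}()$ by $p_i$: $r\_sync_i[i]\gets r\_sync_i[i]+1$ and call the new value $rsn$. Send $\textsc{read}()$ to all $p_j$ with $j\ne i$. Wait until at least $n-t$ indices $j$ have $r\_sync_i[j]=rsn$. Let $sn\gets w\_sync_i[i]$. Wait until at least $n-t$ indices $j$ have $w\_sync_i[j]\ge sn$. Return $history_i[sn]$. On receipt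 of $\textsc{write}(b,v)$ from $p_j$ at $p_i$: Wait until $b=(w\_sync_i[j]+1)\bmod 2$. Let $wsn\gets w\_sync_i[j]+1$. If $wsn=w\_sync_i[i]+1$, then set $w\_sync_i[i]\gets wsn$ and $history_i[wsn]\gets v$, and send $\textsc{write}(wsn\bmod 2,v)$ to each $p_\ell$ with $w\_sync_i[\ell]=wsn-1$. Else, if $wsn<w\_sync_i[i]$, send $\textsc{write}((wsn+1)\bmod 2,history_i[wsn+1])$ to $p_j$. Finally set $w\_sync_i[j]\gets wsn$. On receipt of $\textsc{read}()$ from $p_j$ at $p_i$: Let $sn\gets w\_sync_i[i]$; wait until $w\_sync_i[j]\ge sn$; send $\textsc{proceed}()$ to $p_j$. On receipt of $\textsc{proceed}()$ from $p_j$ at $p_i$: $r\_sync_i[j]\gets r\_sync_i[j]+1$. Message handlers run concurrently; a waiting handler does not block the reception of other messages. *)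

theory Defs
  imports Main
begin

text \<open>Processes are identified by 1..n; the writer is p_w.  Messages and handler
instances carry unique identifiers so that individual messages / handler
executions can be tracked.\<close>

datatype 'v msg = WRITE nat 'v | READ | PROCEED

text \<open>Handler instances that are waiting: HW j b v is the handler for a received
WRITE(b,v) from p_j, waiting on its initial wait; HR j sn is the handler for a
received READ from p_j that recorded sn = w_sync_i[i] at reception.\<close>
datatype 'v hnd = HW nat nat 'v | HR nat nat

datatype opst = OIdle | Writing nat | RdWait1 nat | RdWait2 nat

record 'v lst =
  hist  :: "nat \<Rightarrow> 'v"
  wsync :: "nat \<Rightarrow> nat"
  rsync :: "nat \<Rightarrow> nat"
  ost   :: opst
  pend  :: "(nat \<times> 'v hnd) set"

text \<open>Messages in transit: (id, sender, destination, message).\<close>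
record 'v conf =
  loc     :: "nat \<Rightarrow> 'v lst"
  net     :: "(nat \<times> nat \<times> nat \<times> 'v msg) set"
  crashed :: "nat set"
  cnt     :: nat

datatype 'v act =
    InvWrite 'v | RetWrite | InvRead nat | PassRead nat | RetRead nat
  | Deliver nat | RunH nat nat | Crash nat | Skip

definition upd :: "nat \<Rightarrow> 'v lst \<Rightarrow> 'v conf \<Rightarrow> 'v conf" where
  "upd i s c = c\<lparr>loc := (loc c)(i := s)\<rparr>"

definition send :: "nat \<Rightarrow> nat \<Rightarrow> nat set \<Rightarrow> 'v msg \<Rightarrow> 'v conf \<Rightarrow> 'v conf" where
  "send n i S m c = c\<lparr>net := net c \<union> {(cnt c + l, i, l, m) | l. l \<in> S},
                      cnt := cnt c + n + 1\<rparr>"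

text \<open>Body of the WRITE handler at p_i, executed once its initial wait is passed
(the handler instance (h,hd) has already been removed from the pending set in c).\<close>
definition runW :: "nat \<Rightarrow> nat \<Rightarrow> nat \<Rightarrow> 'v \<Rightarrow> 'v conf \<Rightarrow> 'v conf" where
  "runW n i j v c =
     (let s = loc c i; wsn = wsync s j + 1;
          c1 = (if wsn = wsync s i + 1 then
                  (let s1 = s\<lparr>wsync := (wsync s)(i := wsn), hist := (hist s)(wsn := v)\<rparr>
                   in send n i {l \<in> {1..n}. wsync s1 l = wsn - 1} (WRITE (wsn mod 2) v) (upd i s1 c))
                else if wsn < wsync s i then
                  send n i {j} (WRITE ((wsn + 1) mod 2) (hist s (wsn + 1))) c
                else c);
          s2 = loc c1 i
      in upd i (s2\<lparr>wsync := (wsync s2)(j := wsn)\<rparr>) c1)"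

definition recv :: "nat \<Rightarrow> nat \<Rightarrow> nat \<Rightarrow> 'v msg \<Rightarrow> 'v conf \<Rightarrow> 'v conf" where
  "recv mid src dst m c =
     (let s = loc c dst in
      case m of
        WRITE b v \<Rightarrow> upd dst (s\<lparr>pend := insert (mid, HW src b v) (pend s)\<rparr>) c
      | READ \<Rightarrow> upd dst (s\<lparr>pend := insert (mid, HR src (wsync s dst)) (pend s)\<rparr>) c
      | PROCEED \<Rightarrow> upd dst (s\<lparr>rsync := (rsync s)(src := rsync s src + 1)\<rparr>) c)"

text \<open>One atomic step of the system (n processes, at most t crashes, writer w).\<close>
definition step :: "nat \<Rightarrow> nat \<Rightarrow> nat \<Rightarrow> 'v conf \<Rightarrow> 'v act \<Rightarrow> 'v conf \<Rightarrow> bool" where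
  "step n t w c a c' =
    (case a of
      InvWrite v \<Rightarrow> w \<notin> crashed c \<and> ost (loc c w) = OIdle \<and>
         (let s = loc c w; wsn = wsync s w + 1;
              s' = s\<lparr>wsync := (wsync s)(w := wsn), hist := (hist s)(wsn := v), ost := Writing wsn\<rparr>
          in c' = send n w {j \<in> {1..n}. wsync s' j = wsn - 1} (WRITE (wsn mod 2) v) (upd w s' c))
    | RetWrite \<Rightarrow> w \<notin> crashed c \<and>
         (\<exists>wsn. ost (loc c w) = Writing wsn \<and>
                card {j \<in> {1..n}. wsync (loc c w) j = wsn} \<ge> n - t \<and>
                c' = upd w ((loc c w)\<lparr>ost := OIdle\<rparr>) c)
    | InvRead i \<Rightarrow> i \<in> {1..n} \<and> i \<notin> crashed c \<and> ost (loc c i) = OIdle \<and>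
         (let s = loc c i; rsn = rsync s i + 1;
              s' = s\<lparr>rsync := (rsync s)(i := rsn), ost := RdWait1 rsn\<rparr>
          in c' = send n i {j \<in> {1..n}. j \<noteq> i} READ (upd i s' c))
    | PassRead i \<Rightarrow> i \<in> {1..n} \<and> i \<notin> crashed c \<and>
         (\<exists>rsn. ost (loc c i) = RdWait1 rsn \<and>
                card {j \<in> {1..n}. rsync (loc c i) j = rsn} \<ge> n - t \<and>
                c' = upd i ((loc c i)\<lparr>ost := RdWait2 (wsync (loc c i) i)\<rparr>) c)
    | RetRead i \<Rightarrow> i \<in> {1..n} \<and> i \<notin> crashed c \<and>
         (\<exists>sn. ost (loc c i) = RdWait2 sn \<and>
                card {j \<in> {1..n}. wsync (loc c i) j \<ge> sn} \<ge> n - t \<and>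
                c' = upd i ((loc c i)\<lparr>ost := OIdle\<rparr>) c)
    | Deliver mid \<Rightarrow> (\<exists>src dst m. (mid, src, dst, m) \<in> net c \<and> dst \<notin> crashed c \<and>
                 c' = recv mid src dst m (c\<lparr>net := net c - {(mid, src, dst, m)}\<rparr>))
    | RunH i h \<Rightarrow> i \<in> {1..n} \<and> i \<notin> crashed c \<and>
         (\<exists>hd. (h, hd) \<in> pend (loc c i) \<and>
            (let s = loc c i; c0 = upd i (s\<lparr>pend := pend s - {(h, hd)}\<rparr>) c in
             case hd of
               HW j b v \<Rightarrow> b = (wsync s j + 1) mod 2 \<and> c' = runW n i j v c0
             | HR j sn \<Rightarrow> wsync s j \<ge> sn \<and> c' = send n i {j} PROCEED c0))
    | Crash i \<Rightarrow> i \<in> {1..n} \<and> i \<notin> crashed c \<and> card (insert i (crashed c)) \<le> t \<and>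
         c' = c\<lparr>crashed := insert i (crashed c)\<rparr>
    | Skip \<Rightarrow> c' = c)"

definition init_conf :: "'v \<Rightarrow> 'v conf \<Rightarrow> bool" where
  "init_conf v0 c \<longleftrightarrow> net c = {} \<and> crashed c = {} \<and> cnt c = 0 \<and>
     (\<forall>i. hist (loc c i) 0 = v0 \<and> wsync (loc c i) = (\<lambda>_. 0) \<and> rsync (loc c i) = (\<lambda>_. 0)
          \<and> ost (loc c i) = OIdle \<and> pend (loc c i) = {})"

definition enabled :: "nat \<Rightarrow> nat \<Rightarrow> nat \<Rightarrow> 'v conf \<Rightarrow> 'v act \<Rightarrow> bool" where
  "enabled n t w c a \<longleftrightarrow> (\<exists>c'. step n t w c a c')"

definition correct :: "nat \<Rightarrow> (nat \<Rightarrow> 'v conf) \<Rightarrow> nat \<Rightarrow> bool" where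
  "correct n \<rho> i \<longleftrightarrow> i \<in> {1..n} \<and> (\<forall>k. i \<notin> crashed (\<rho> k))"

text \<open>Local (non-invocation) actions of process p_i, subject to weak fairness.\<close>
definition local_act :: "nat \<Rightarrow> nat \<Rightarrow> 'v act \<Rightarrow> bool" where
  "local_act w i a \<longleftrightarrow> a = PassRead i \<or> a = RetRead i \<or> (\<exists>h. a = RunH i h) \<or> (i = w \<and> a = RetWrite)"

definition run :: "nat \<Rightarrow> nat \<Rightarrow> nat \<Rightarrow> 'v \<Rightarrow> (nat \<Rightarrow> 'v conf) \<Rightarrow> (nat \<Rightarrow> 'v act) \<Rightarrow> bool" where
  "run n t w v0 \<rho> \<sigma> \<longleftrightarrow>
     init_conf v0 (\<rho> 0) \<and>
     (\<forall>k. step n t w (\<rho> k) (\<sigma> k) (\<rho> (Suc k))) \<and>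
     \<comment> \<open>reliable channels: every message to a correct process is eventually received\<close>
     (\<forall>k mid src dst m. (mid, src, dst, m) \<in> net (\<rho> k) \<and> correct n \<rho> dst \<longrightarrow>
          (\<exists>k' \<ge> k. \<sigma> k' = Deliver mid)) \<and>
     \<comment> \<open>weak fairness: a correct process eventually takes a continuously enabled local step\<close>
     (\<forall>i a k0. correct n \<rho> i \<and> local_act w i a \<and> (\<forall>k \<ge> k0. enabled n t w (\<rho> k) a) \<longrightarrow>
          (\<exists>k \<ge> k0. \<sigma> k = a))"

end

theory Submission imports Defs begin

text \<open>
The key invariant concerns the channel from \<open>p_j\<close> to \<open>p_i\<close>: counting both the messages in
transit and the received ones whose handler still waits, there are
\<open>min (w_sync_j[j], w_sync_j[i] + 1) - w_sync_i[j]\<close> outstanding writes, at most two, with pairwise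
distinct bits: \<open>w_sync_i[j] + 1\<close> and, if there is a second one, \<open>w_sync_i[j] + 2\<close> (mod 2).  Only a write handler from \<open>p_j\<close> with the expected bit changes \<open>w_sync_i[j]\<close>, so a waiting
handler with the expected bit stays enabled until it runs, and weak fairness makes it run.  A
waiting handler with the other bit is the second of two outstanding writes; the first one is
eventually delivered and run, which increments \<open>w_sync_i[j]\<close> and makes the bit of the second
one the expected bit.
\<close>

abbreviation ws :: "'v conf \<Rightarrow> nat \<Rightarrow> nat \<Rightarrow> nat" where
  "ws c p q \<equiv> wsync (loc c p) q"

definition drop_handler :: "nat \<Rightarrow> nat \<Rightarrow> 'v hnd \<Rightarrow> 'v conf \<Rightarrow> 'v conf" where
  "drop_handler i h hx c = upd i ((loc c i)\<lparr>pend := pend (loc c i) - {(h, hx)}\<rparr>) c"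

lemma ex_least_nat_ge:
  fixes k :: nat
  assumes "\<exists>k' \<ge> k. P k'"
  obtains k' where "k \<le> k'" "P k'" "\<And>k''. k \<le> k'' \<Longrightarrow> k'' < k' \<Longrightarrow> \<not> P k''"
proof -
  let ?k' = "LEAST k'. k \<le> k' \<and> P k'"
  have "k \<le> ?k' \<and> P ?k'" using LeastI_ex[OF assms[unfolded Bex_def]] by blast
  moreover have "\<not> P k''" if "k \<le> k''" "k'' < ?k'" for k'' using not_less_Least that by blast
  ultimately show thesis using that by blast
qed

lemma upd_simps [simp]:
  "loc (upd i s c) = (loc c)(i := s)" "net (upd i s c) = net c"
  "cnt (upd i s c) = cnt c" "crashed (upd i s c) = crashed c"
  by (simp_all add: upd_def)

lemma send_simps [simp]:
  "loc (send n p S m c) = loc c"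
  "net (send n p S m c) = net c \<union> {(cnt c + l, p, l, m) | l. l \<in> S}"
  "cnt (send n p S m c) = cnt c + n + 1" "crashed (send n p S m c) = crashed c"
  by (simp_all add: send_def)

lemma drop_handler_simps [simp]:
  "wsync (loc (drop_handler i h hx c) p) = wsync (loc c p)"
  "hist (loc (drop_handler i h hx c) p) = hist (loc c p)"
  "cnt (drop_handler i h hx c) = cnt c"
  by (simp_all add: drop_handler_def)

lemma runW_pend: "pend (loc (runW n i j v c) p) = pend (loc c p)"
  unfolding runW_def Let_def by simp

lemma runW_ws:
  assumes "j \<noteq> i"
  shows "ws (runW n i j v c) i j = ws c i j + 1"
    and "q \<noteq> i \<Longrightarrow> q \<noteq> j \<Longrightarrow> ws (runW n i j v c) i q = ws c i q"
    and "p \<noteq> i \<Longrightarrow> ws (runW n i j v c) p q = ws c p q"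
  using assms unfolding runW_def Let_def by simp_all

lemma runW_adopt:
  assumes "j \<noteq> i" and "ws c i j = ws c i i"
  shows "runW n i j v c =
     send n i {l \<in> {1..n}. l \<noteq> i \<and> ws c i l = ws c i i} (WRITE ((ws c i i + 1) mod 2) v)
       (upd i ((loc c i)\<lparr>hist := (hist (loc c i))(ws c i i + 1 := v),
                wsync := (wsync (loc c i))(i := ws c i i + 1, j := ws c i i + 1)\<rparr>) c)"
proof -
  have "{l \<in> {1..n}. ((wsync (loc c i))(i := ws c i i + 1)) l = ws c i i + 1 - 1}
        = {l \<in> {1..n}. l \<noteq> i \<and> ws c i l = ws c i i}" by auto
  then show ?thesis
    unfolding runW_def Let_def using assms by (simp add: upd_def send_def)
qed

lemma runW_reply:
  assumes "j \<noteq> i" and "ws c i j + 1 < ws c i i"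
  shows "runW n i j v c =
     send n i {j} (WRITE ((ws c i j + 2) mod 2) (hist (loc c i) (ws c i j + 2)))
       (upd i ((loc c i)\<lparr>wsync := (wsync (loc c i))(j := ws c i j + 1)\<rparr>) c)"
  unfolding runW_def Let_def using assms by (simp add: upd_def send_def)

lemma runW_record:
  assumes "j \<noteq> i" and "ws c i j \<noteq> ws c i i" and "\<not> ws c i j + 1 < ws c i i"
  shows "runW n i j v c = upd i ((loc c i)\<lparr>wsync := (wsync (loc c i))(j := ws c i j + 1)\<rparr>) c"
  unfolding runW_def Let_def using assms by (simp add: upd_def send_def)

lemma step_RunHE:
  assumes "step n t w c (RunH i h) c'"
  obtains (HW) j b v where "i \<in> {1..n}" "i \<notin> crashed c" "(h, HW j b v) \<in> pend (loc c i)"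
      "b = (ws c i j + 1) mod 2" "c' = runW n i j v (drop_handler i h (HW j b v) c)"
    | (HR) j sn where "i \<in> {1..n}" "i \<notin> crashed c" "(h, HR j sn) \<in> pend (loc c i)"
      "sn \<le> ws c i j" "c' = send n i {j} PROCEED (drop_handler i h (HR j sn) c)"
proof -
  obtain hx where "i \<in> {1..n}" "i \<notin> crashed c" "(h, hx) \<in> pend (loc c i)"
    and c': "case hx of
        HW j b v \<Rightarrow> b = (ws c i j + 1) mod 2 \<and> c' = runW n i j v (drop_handler i h hx c)
      | HR j sn \<Rightarrow> sn \<le> ws c i j \<and> c' = send n i {j} PROCEED (drop_handler i h hx c)"
    using assms unfolding step_def Let_def drop_handler_def by auto
  then show thesis using that by (cases hx) auto
qed

lemma step_DeliverE:
  assumes "step n t w c (Deliver mid) c'"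
  obtains src dst m where "(mid, src, dst, m) \<in> net c"
    "c' = recv mid src dst m (c\<lparr>net := net c - {(mid, src, dst, m)}\<rparr>)"
  using assms unfolding step_def by auto

section \<open>Well-formedness of message and handler identifiers\<close>

definition wf_conf :: "nat \<Rightarrow> 'v conf \<Rightarrow> bool" where
  "wf_conf n c \<longleftrightarrow>
    (\<forall>m x x'. (m, x) \<in> net c \<longrightarrow> (m, x') \<in> net c \<longrightarrow> x = x') \<and>
    (\<forall>m x. (m, x) \<in> net c \<longrightarrow> m < cnt c) \<and>
    (\<forall>p m h. (m, h) \<in> pend (loc c p) \<longrightarrow> m < cnt c \<and> (\<forall>x. (m, x) \<notin> net c)) \<and>
    (\<forall>p m h h'. (m, h) \<in> pend (loc c p) \<longrightarrow> (m, h') \<in> pend (loc c p) \<longrightarrow> h = h') \<and>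
    (\<forall>m s d x. (m, s, d, x) \<in> net c \<longrightarrow>
       s \<in> {1..n} \<and> d \<in> {1..n} \<and> (\<forall>b v. x = WRITE b v \<longrightarrow> s \<noteq> d)) \<and>
    (\<forall>p m j b v. (m, HW j b v) \<in> pend (loc c p) \<longrightarrow> j \<in> {1..n} \<and> j \<noteq> p) \<and>
    (\<forall>p m j sn. (m, HR j sn) \<in> pend (loc c p) \<longrightarrow> j \<in> {1..n})"

lemma wf_confD:
  assumes "wf_conf n c"
  shows wf_conf_net_unique: "(m, x) \<in> net c \<Longrightarrow> (m, x') \<in> net c \<Longrightarrow> x = x'"
    and wf_conf_net_fresh: "(m, x) \<in> net c \<Longrightarrow> m < cnt c"
    and wf_conf_pend_fresh: "(m, h) \<in> pend (loc c p) \<Longrightarrow> m < cnt c"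
    and wf_conf_pend_not_net: "(m, h) \<in> pend (loc c p) \<Longrightarrow> (m, x) \<notin> net c"
    and wf_conf_pend_unique: "(m, h) \<in> pend (loc c p) \<Longrightarrow> (m, h') \<in> pend (loc c p) \<Longrightarrow> h = h'"
    and wf_conf_net_src: "(m, s, d, y) \<in> net c \<Longrightarrow> s \<in> {1..n}"
    and wf_conf_net_dst: "(m, s, d, y) \<in> net c \<Longrightarrow> d \<in> {1..n}"
    and wf_conf_net_WRITE: "(m, s, d, WRITE b v) \<in> net c \<Longrightarrow> s \<noteq> d"
    and wf_conf_pend_HW: "(m, HW j b v) \<in> pend (loc c p) \<Longrightarrow> j \<in> {1..n} \<and> j \<noteq> p"
    and wf_conf_pend_HR: "(m, HR j sn) \<in> pend (loc c p) \<Longrightarrow> j \<in> {1..n}"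
proof -
  note A = assms[unfolded wf_conf_def]
  note net_ids = conjunct1[OF A] conjunct1[OF conjunct2[OF A]]
  note pend_ids = conjunct1[OF conjunct2[OF conjunct2[OF A]]]
    conjunct1[OF conjunct2[OF conjunct2[OF conjunct2[OF A]]]]
  note ends = conjunct1[OF conjunct2[OF conjunct2[OF conjunct2[OF conjunct2[OF A]]]]]
    conjunct2[OF conjunct2[OF conjunct2[OF conjunct2[OF conjunct2[OF A]]]]]
  show "(m, x) \<in> net c \<Longrightarrow> (m, x') \<in> net c \<Longrightarrow> x = x'" using net_ids by blast
  show "(m, x) \<in> net c \<Longrightarrow> m < cnt c" using net_ids by blast
  show "(m, h) \<in> pend (loc c p) \<Longrightarrow> m < cnt c" using pend_ids by blast
  show "(m, h) \<in> pend (loc c p) \<Longrightarrow> (m, x) \<notin> net c" using pend_ids by blast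
  show "(m, h) \<in> pend (loc c p) \<Longrightarrow> (m, h') \<in> pend (loc c p) \<Longrightarrow> h = h'" using pend_ids by blast
  show "(m, s, d, y) \<in> net c \<Longrightarrow> s \<in> {1..n}" using ends by blast
  show "(m, s, d, y) \<in> net c \<Longrightarrow> d \<in> {1..n}" using ends by blast
  show "(m, s, d, WRITE b v) \<in> net c \<Longrightarrow> s \<noteq> d" using ends by blast
  show "(m, HW j b v) \<in> pend (loc c p) \<Longrightarrow> j \<in> {1..n} \<and> j \<noteq> p" using ends by blast
  show "(m, HR j sn) \<in> pend (loc c p) \<Longrightarrow> j \<in> {1..n}" using ends by blast
qed

lemma wf_confI:
  assumes "\<And>m x x'. (m, x) \<in> net c \<Longrightarrow> (m, x') \<in> net c \<Longrightarrow> x = x'"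
    and "\<And>m x. (m, x) \<in> net c \<Longrightarrow> m < cnt c"
    and "\<And>m h p. (m, h) \<in> pend (loc c p) \<Longrightarrow> m < cnt c"
    and "\<And>m h p x. (m, h) \<in> pend (loc c p) \<Longrightarrow> (m, x) \<notin> net c"
    and "\<And>m h h' p. (m, h) \<in> pend (loc c p) \<Longrightarrow> (m, h') \<in> pend (loc c p) \<Longrightarrow> h = h'"
    and "\<And>m s d y. (m, s, d, y) \<in> net c \<Longrightarrow> s \<in> {1..n} \<and> d \<in> {1..n}"
    and "\<And>m s d b v. (m, s, d, WRITE b v) \<in> net c \<Longrightarrow> s \<noteq> d"
    and "\<And>m j b v p. (m, HW j b v) \<in> pend (loc c p) \<Longrightarrow> j \<in> {1..n} \<and> j \<noteq> p"
    and "\<And>m j sn p. (m, HR j sn) \<in> pend (loc c p) \<Longrightarrow> j \<in> {1..n}"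
  shows "wf_conf n c"
  unfolding wf_conf_def
  apply (intro conjI allI impI)
  subgoal using assms(1) by blast
  subgoal using assms(2) by blast
  subgoal using assms(3) by blast
  subgoal using assms(4) by blast
  subgoal using assms(5) by blast
  subgoal using assms(6) by blast
  subgoal using assms(6) by blast
  subgoal using assms(7) by blast
  subgoal using assms(8) by blast
  subgoal using assms(8) by blast
  subgoal using assms(9) by blast
  done

lemma net_send_cases:
  assumes "(mm, x) \<in> net (send n p S m c)"
  obtains "(mm, x) \<in> net c" | l where "l \<in> S" "mm = cnt c + l" "x = (p, l, m)"
  using assms by auto

lemma wf_conf_send:
  assumes I: "wf_conf n c" and p: "p \<in> {1..n}" and S: "S \<subseteq> {1..n}"
    and nw: "\<And>b v. m = WRITE b v \<Longrightarrow> p \<notin> S"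
  shows "wf_conf n (send n p S m c)"
proof (rule wf_confI, goal_cases)
  case (1 mm x x')
  show ?case
  proof (rule net_send_cases[OF 1(1)]; rule net_send_cases[OF 1(2)])
    assume "(mm, x) \<in> net c" "(mm, x') \<in> net c" then show ?thesis using wf_conf_net_unique[OF I] by blast
  next
    fix l assume "(mm, x) \<in> net c" "mm = cnt c + l"
    then show ?thesis using wf_conf_net_fresh[OF I, of mm x] by simp
  next
    fix l assume "(mm, x') \<in> net c" "mm = cnt c + l"
    then show ?thesis using wf_conf_net_fresh[OF I, of mm x'] by simp
  next
    fix l l' assume "mm = cnt c + l" "x = (p, l, m)" "mm = cnt c + l'" "x' = (p, l', m)"
    then show ?thesis by simp
  qed
next
  case (2 mm x)
  show ?case
  proof (rule net_send_cases[OF 2])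
    assume "(mm, x) \<in> net c" then show ?thesis using wf_conf_net_fresh[OF I, of mm x] by simp
  next
    fix l assume "l \<in> S" "mm = cnt c + l"
    moreover have "l \<le> n" using S \<open>l \<in> S\<close> by auto
    ultimately show ?thesis by simp
  qed
next
  case (3 mm h q)
  then have "mm < cnt c" using wf_conf_pend_fresh[OF I] by simp
  then show ?case by simp
next
  case (4 mm h q x)
  then have a: "mm < cnt c" "(mm,x) \<notin> net c" using wf_confD(3,4)[OF I] by simp_all
  show ?case
  proof
    assume "(mm, x) \<in> net (send n p S m c)"
    then show False by (rule net_send_cases) (use a in simp_all)
  qed
next
  case (5 mm h h' q)
  then show ?case using wf_conf_pend_unique[OF I] by simp
next
  case (6 mm s d y)
  show ?case by (rule net_send_cases[OF 6]) (use wf_confD(6,7)[OF I] p S in auto)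
next
  case (7 mm s d b v)
  show ?case by (rule net_send_cases[OF 7]) (use wf_conf_net_WRITE[OF I] nw in auto)
next
  case (8 mm j b v q)
  then show ?case using wf_conf_pend_HW[OF I] by auto
next
  case (9 mm j sn q)
  then show ?case using wf_conf_pend_HR[OF I] by auto
qed

lemma wf_conf_upd:
  assumes I: "wf_conf n c" and P: "pend s \<subseteq> pend (loc c p)"
  shows "wf_conf n (upd p s c)"
proof -
  have sub: "pend (((loc c)(p := s)) q) \<subseteq> pend (loc c q)" for q using P by auto
  show ?thesis
  proof (rule wf_confI, goal_cases)
    case 1 then show ?case using wf_conf_net_unique[OF I] by simp
  next case 2 then show ?case using wf_conf_net_fresh[OF I] by simp
  next case 3 then show ?case using wf_conf_pend_fresh[OF I] sub by (simp, blast)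
  next case 4 then show ?case using wf_conf_pend_not_net[OF I] sub by (simp, blast)
  next case 5 then show ?case using wf_conf_pend_unique[OF I] sub by (simp, blast)
  next case 6 then show ?case using wf_conf_net_src[OF I] wf_conf_net_dst[OF I] by simp
  next case 7 then show ?case using wf_conf_net_WRITE[OF I] by simp
  next case (8 m j b v q) then show ?case using wf_conf_pend_HW[OF I] sub[of q] by (simp, blast)
  next case (9 m j sn q) then show ?case using wf_conf_pend_HR[OF I] sub[of q] by (simp, blast)
  qed
qed

lemma wf_conf_drop_handler: "wf_conf n c \<Longrightarrow> wf_conf n (drop_handler i h hx c)"
  unfolding drop_handler_def by (rule wf_conf_upd) auto

lemma wf_conf_net_remove:
  assumes I: "wf_conf n c"
  shows "wf_conf n (c\<lparr>net := net c - X\<rparr>)"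
proof (rule wf_confI, goal_cases)
  case 1 then show ?case using wf_conf_net_unique[OF I] by (simp, metis)
next case 2 then show ?case using wf_conf_net_fresh[OF I] by (simp, metis)
next case 3 then show ?case using wf_conf_pend_fresh[OF I] by simp
next case 4 then show ?case using wf_conf_pend_not_net[OF I] by simp
next case 5 then show ?case using wf_conf_pend_unique[OF I] by simp
next case 6 then show ?case using wf_confD(6,7)[OF I] by (simp, meson)
next case (7 m s d b v) then have "(m,s,d,WRITE b v) \<in> net c" by simp
    then show ?case by (rule wf_conf_net_WRITE[OF I])
next case 8 then show ?case using wf_conf_pend_HW[OF I] by simp
next case 9 then show ?case using wf_conf_pend_HR[OF I] by simp
qed

lemma wf_conf_receive:
  assumes I: "wf_conf n c" and M: "(mid, x0) \<in> net c"
    and H1: "\<And>j b v. hh = HW j b v \<Longrightarrow> j \<in> {1..n} \<and> j \<noteq> p"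
    and H2: "\<And>j sn. hh = HR j sn \<Longrightarrow> j \<in> {1..n}"
  shows "wf_conf n (upd p ((loc c p)\<lparr>pend := insert (mid, hh) (pend (loc c p))\<rparr>) (c\<lparr>net := net c - {(mid, x0)}\<rparr>))"
    (is "wf_conf n ?c")
proof -
  have pe: "\<And>q. pend (loc ?c q) = (if q = p then insert (mid, hh) (pend (loc c p)) else pend (loc c q))"
    by simp
  have ne: "net ?c = net c - {(mid, x0)}" by simp
  have midc: "mid < cnt c" using wf_conf_net_fresh[OF I M] .
  have nopend: "\<And>q h. (mid, h) \<notin> pend (loc c q)" by (meson wf_conf_pend_not_net[OF I] M)
  have only: "\<And>x. (mid, x) \<in> net c \<Longrightarrow> x = x0" using wf_conf_net_unique[OF I _ M] by blast
  show ?thesis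
  proof (rule wf_confI, goal_cases)
    case 1 then show ?case using wf_conf_net_unique[OF I] by (simp, metis)
  next case 2 then show ?case using wf_conf_net_fresh[OF I] by (simp, metis)
  next case (3 m h q) then show ?case using wf_conf_pend_fresh[OF I, of m h q] midc
      by (simp split: if_splits) blast
  next case (4 m h q x)
    show ?case
    proof (cases "m = mid")
      case True then show ?thesis using only by (simp only: ne) blast
    next
      case False
      then have "(m, h) \<in> pend (loc c q)" using 4 by (simp split: if_splits)
      then show ?thesis using wf_conf_pend_not_net[OF I] by (simp only: ne) blast
    qed
  next case (5 m h h' q)
    then show ?case using wf_conf_pend_unique[OF I, of m h q h'] nopend by (simp split: if_splits) blast+
  next case 6 then show ?case using wf_confD(6,7)[OF I] by (simp, meson)
  next case (7 m s d b v) then have "(m,s,d,WRITE b v) \<in> net c" by simp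
    then show ?case by (rule wf_conf_net_WRITE[OF I])
  next case (8 m j b v q) then show ?case using wf_conf_pend_HW[OF I, of m j b v q] H1
      by (simp split: if_splits) blast+
  next case (9 m j sn q) then show ?case using wf_conf_pend_HR[OF I, of m j sn q] H2
      by (simp split: if_splits) blast+
  qed
qed

lemma wf_conf_recv:
  assumes I: "wf_conf n c" and M: "(mid, src, dst, m) \<in> net c"
  shows "wf_conf n (recv mid src dst m (c\<lparr>net := net c - {(mid, src, dst, m)}\<rparr>))"
proof (cases m)
  case (WRITE b v)
  then have "src \<in> {1..n}" "src \<noteq> dst"
    using wf_conf_net_src[OF I M] wf_conf_net_WRITE[OF I] M by auto
  then show ?thesis
    using wf_conf_receive[OF I M, of "HW src b v" dst] WRITE by (simp add: recv_def Let_def)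
next
  case READ
  have "src \<in> {1..n}" using wf_conf_net_src[OF I M] .
  then show ?thesis
    using wf_conf_receive[OF I M, of "HR src (ws c dst dst)" dst] READ
    by (simp add: recv_def Let_def)
next
  case PROCEED
  have "wf_conf n (c\<lparr>net := net c - {(mid, src, dst, m)}\<rparr>)" by (rule wf_conf_net_remove[OF I])
  then show ?thesis using PROCEED by (simp add: recv_def Let_def wf_conf_upd)
qed

lemma wf_conf_runW:
  assumes I: "wf_conf n c" and "i \<in> {1..n}" "j \<in> {1..n}" "j \<noteq> i"
  shows "wf_conf n (runW n i j v c)"
proof -
  consider "ws c i j = ws c i i" | "ws c i j \<noteq> ws c i i" "ws c i j + 1 < ws c i i"
    | "ws c i j \<noteq> ws c i i" "\<not> ws c i j + 1 < ws c i i" by blast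
  then show ?thesis
  proof cases
    case 1
    show ?thesis unfolding runW_adopt[OF \<open>j \<noteq> i\<close> 1]
      by (rule wf_conf_send[OF wf_conf_upd[OF I]]) (use assms in auto)
  next
    case 2
    show ?thesis unfolding runW_reply[OF \<open>j \<noteq> i\<close> 2(2)]
      by (rule wf_conf_send[OF wf_conf_upd[OF I]]) (use assms in auto)
  next
    case 3
    show ?thesis unfolding runW_record[OF \<open>j \<noteq> i\<close> 3] by (rule wf_conf_upd[OF I]) auto
  qed
qed

lemma step_wf_conf:
  assumes st: "step n t w c a c'" and w: "w \<in> {1..n}" and I: "wf_conf n c"
  shows "wf_conf n c'"
proof (cases a)
  case (Deliver mid)
  with st show ?thesis by (auto elim: step_DeliverE intro: wf_conf_recv[OF I])
next
  case (RunH i h)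
  from st[unfolded RunH] show ?thesis
  proof (cases rule: step_RunHE)
    case (HW j b v)
    then have "j \<in> {1..n}" "j \<noteq> i" using wf_conf_pend_HW[OF I] by blast+
    with HW show ?thesis by (auto intro!: wf_conf_runW wf_conf_drop_handler I)
  next
    case (HR j sn)
    then show ?thesis
      using wf_conf_pend_HR[OF I] by (auto intro!: wf_conf_send wf_conf_drop_handler I)
  qed
next
  case (Crash i)
  with st I show ?thesis unfolding step_def wf_conf_def by auto
qed (use st in \<open>auto simp: step_def Let_def intro!: wf_conf_send wf_conf_upd I w\<close>)

section \<open>Outstanding writes on a channel\<close>

definition write_outstanding :: "'v conf \<Rightarrow> nat \<Rightarrow> nat \<Rightarrow> nat \<Rightarrow> nat \<Rightarrow> bool" where
  "write_outstanding c j i m b \<longleftrightarrow>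
     (\<exists>v. (m, j, i, WRITE b v) \<in> net c) \<or> (\<exists>v. (m, HW j b v) \<in> pend (loc c i))"

definition outstanding_writes :: "'v conf \<Rightarrow> nat \<Rightarrow> nat \<Rightarrow> nat set" where
  "outstanding_writes c j i = {m. \<exists>b. write_outstanding c j i m b}"

definition channel_inv :: "'v conf \<Rightarrow> nat \<Rightarrow> nat \<Rightarrow> bool" where
  "channel_inv c j i \<longleftrightarrow>
     card (outstanding_writes c j i) + ws c i j = min (ws c j j) (ws c j i + 1) \<and>
     (\<forall>m b. write_outstanding c j i m b \<longrightarrow> b = (ws c i j + 1) mod 2 \<or>
        (b = (ws c i j + 2) mod 2 \<and> card (outstanding_writes c j i) = 2)) \<and>
     (\<forall>m m' b. write_outstanding c j i m b \<longrightarrow> write_outstanding c j i m' b \<longrightarrow> m = m')"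

definition sync_inv :: "nat \<Rightarrow> 'v conf \<Rightarrow> bool" where
  "sync_inv n c \<longleftrightarrow>
     (\<forall>p q. p \<in> {1..n} \<longrightarrow> q \<in> {1..n} \<longrightarrow> ws c p q \<le> ws c p p) \<and>
     (\<forall>i j. i \<in> {1..n} \<longrightarrow> j \<in> {1..n} \<longrightarrow> j \<noteq> i \<longrightarrow> channel_inv c j i)"

lemma sync_invD:
  assumes "sync_inv n c"
  shows sync_inv_ws_le: "p \<in> {1..n} \<Longrightarrow> q \<in> {1..n} \<Longrightarrow> ws c p q \<le> ws c p p"
    and sync_inv_channel: "i \<in> {1..n} \<Longrightarrow> j \<in> {1..n} \<Longrightarrow> j \<noteq> i \<Longrightarrow> channel_inv c j i"
  using assms unfolding sync_inv_def by blast+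

lemma channel_inv_card:
  "channel_inv c j i \<Longrightarrow> card (outstanding_writes c j i) + ws c i j = min (ws c j j) (ws c j i + 1)"
  unfolding channel_inv_def by blast

lemma channel_inv_bit:
  "channel_inv c j i \<Longrightarrow> write_outstanding c j i m b \<Longrightarrow>
     b = (ws c i j + 1) mod 2 \<or> (b = (ws c i j + 2) mod 2 \<and> card (outstanding_writes c j i) = 2)"
  unfolding channel_inv_def by blast

lemma channel_inv_bit_unique:
  "channel_inv c j i \<Longrightarrow> write_outstanding c j i m b \<Longrightarrow> write_outstanding c j i m' b \<Longrightarrow> m = m'"
  unfolding channel_inv_def by blast

lemma outstanding_writes_less_cnt:
  "wf_conf n c \<Longrightarrow> m \<in> outstanding_writes c j i \<Longrightarrow> m < cnt c"
  unfolding outstanding_writes_def write_outstanding_def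
  by (auto dest: wf_conf_net_fresh wf_conf_pend_fresh)

lemma outstanding_writes_finite: "wf_conf n c \<Longrightarrow> finite (outstanding_writes c j i)"
  by (rule finite_subset[of _ "{..<cnt c}"]) (auto dest: outstanding_writes_less_cnt)

lemma card_outstanding_writes_pos:
  "wf_conf n c \<Longrightarrow> write_outstanding c j i m b \<Longrightarrow> 1 \<le> card (outstanding_writes c j i)"
  using outstanding_writes_finite[of n c j i]
  by (metis (mono_tags) One_nat_def Suc_leI card_gt_0_iff empty_iff mem_Collect_eq
      outstanding_writes_def)

lemma channel_inv_other_write:
  assumes P: "channel_inv c j i"
    and h: "write_outstanding c j i h b" and b: "b \<noteq> (ws c i j + 1) mod 2"
  shows "b = (ws c i j + 2) mod 2"
    and "\<exists>m. write_outstanding c j i m ((ws c i j + 1) mod 2)"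
proof -
  have card2: "card (outstanding_writes c j i) = 2" and two: "b = (ws c i j + 2) mod 2"
    using channel_inv_bit[OF P h] b by auto
  show "b = (ws c i j + 2) mod 2" by (rule two)
  have "h \<in> outstanding_writes c j i" using h unfolding outstanding_writes_def by blast
  with card2 obtain m where m: "m \<in> outstanding_writes c j i" "m \<noteq> h"
    by (metis card_2_iff insert_iff)
  then obtain b' where m': "write_outstanding c j i m b'" unfolding outstanding_writes_def by blast
  have "b' \<noteq> b" using channel_inv_bit_unique[OF P h] m' m(2) by blast
  then have "b' = (ws c i j + 1) mod 2" using channel_inv_bit[OF P m'] two by blast
  with m' show "\<exists>m. write_outstanding c j i m ((ws c i j + 1) mod 2)" by blast
qed

lemma write_outstanding_send:
  "write_outstanding (send n p S m c) j i x b \<longleftrightarrow>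
     write_outstanding c j i x b \<or> (j = p \<and> i \<in> S \<and> x = cnt c + i \<and> (\<exists>v. m = WRITE b v))"
  unfolding write_outstanding_def by auto

lemma write_outstanding_send_WRITE:
  "write_outstanding (send n p S (WRITE b0 v) c) j i x b \<longleftrightarrow>
     write_outstanding c j i x b \<or> (j = p \<and> i \<in> S \<and> x = cnt c + i \<and> b = b0)"
  unfolding write_outstanding_send by auto

lemma write_outstanding_send_other:
  "(\<And>b v. m \<noteq> WRITE b v) \<Longrightarrow> write_outstanding (send n p S m c) j i x b = write_outstanding c j i x b"
  unfolding write_outstanding_send by auto

lemma write_outstanding_upd:
  "pend s = pend (loc c p) \<Longrightarrow> write_outstanding (upd p s c) j i x b = write_outstanding c j i x b"
  unfolding write_outstanding_def by auto

lemma write_outstanding_crash: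
  "write_outstanding (c\<lparr>crashed := X\<rparr>) j i x b = write_outstanding c j i x b"
  unfolding write_outstanding_def by simp

lemma write_outstanding_pending:
  assumes I: "wf_conf n c" and H: "(h, hx) \<in> pend (loc c i)" and W: "write_outstanding c j i h b"
  shows "\<exists>v. hx = HW j b v"
proof -
  have "(h, y) \<notin> net c" for y using wf_conf_pend_not_net[OF I H] .
  then obtain v where "(h, HW j b v) \<in> pend (loc c i)" using W unfolding write_outstanding_def by blast
  then show ?thesis using wf_conf_pend_unique[OF I _ H] by blast
qed

lemma write_outstanding_drop_handler:
  assumes I: "wf_conf n c" and H: "(h, hx) \<in> pend (loc c i0)"
  shows "write_outstanding (drop_handler i0 h hx c) j i x b \<longleftrightarrow>
     write_outstanding c j i x b \<and> \<not> (i = i0 \<and> x = h)"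
proof -
  have "(h, y) \<notin> net c" for y using wf_conf_pend_not_net[OF I H] .
  moreover have "hx' = hx" if "(h, hx') \<in> pend (loc c i0)" for hx'
    using wf_conf_pend_unique[OF I that H] .
  ultimately show ?thesis unfolding write_outstanding_def drop_handler_def by auto
qed

lemma write_outstanding_recv:
  assumes M: "(mid, src, dst, m) \<in> net c"
  shows "write_outstanding (recv mid src dst m (c\<lparr>net := net c - {(mid, src, dst, m)}\<rparr>)) j i x b
     \<longleftrightarrow> write_outstanding c j i x b"
proof (cases m)
  case (WRITE b' v')
  with M show ?thesis
    unfolding write_outstanding_def recv_def Let_def by auto
next
  case READ
  then show ?thesis unfolding write_outstanding_def recv_def Let_def by auto
next
  case PROCEED
  then show ?thesis unfolding write_outstanding_def recv_def Let_def by auto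
qed

lemma channel_inv_frame:
  assumes "channel_inv c j i" and "\<And>x b. write_outstanding c' j i x b = write_outstanding c j i x b"
    and "ws c' i j = ws c i j" and "min (ws c' j j) (ws c' j i + 1) = min (ws c j j) (ws c j i + 1)"
  shows "channel_inv c' j i"
proof -
  have "write_outstanding c' j i = write_outstanding c j i" using assms(2) by (intro ext) simp
  then have "outstanding_writes c' j i = outstanding_writes c j i"
    unfolding outstanding_writes_def by simp
  then show ?thesis using assms unfolding channel_inv_def by simp
qed

section \<open>Preservation of the channel invariant\<close>

lemma channel_inv_add:
  assumes P: "channel_inv c j i"
    and W: "\<And>x b. write_outstanding c' j i x b = (write_outstanding c j i x b \<or> (x = xz \<and> b = bz))"
    and xz: "xz \<notin> outstanding_writes c j i" and fin: "finite (outstanding_writes c j i)"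
    and recv_ws: "ws c' i j = ws c i j"
    and send_ws: "min (ws c' j j) (ws c' j i + 1) = min (ws c j j) (ws c j i + 1) + 1"
    and bz: "bz = (ws c i j + card (outstanding_writes c j i) + 1) mod 2"
    and le: "card (outstanding_writes c j i) \<le> 1"
  shows "channel_inv c' j i"
proof -
  have "outstanding_writes c' j i = insert xz (outstanding_writes c j i)"
    using W unfolding outstanding_writes_def by auto
  then have card': "card (outstanding_writes c' j i) = card (outstanding_writes c j i) + 1"
    using xz fin by simp
  have old: "card (outstanding_writes c j i) = 1 \<and> b = (ws c i j + 1) mod 2"
    if "write_outstanding c j i m b" for m b
  proof -
    have "m \<in> outstanding_writes c j i" using that unfolding outstanding_writes_def by blast
    then have "card (outstanding_writes c j i) \<ge> 1"
      using fin by (metis One_nat_def Suc_leI card_gt_0_iff empty_iff)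
    then have "card (outstanding_writes c j i) = 1" using le by simp
    then show ?thesis using channel_inv_bit[OF P that] by simp
  qed
  show ?thesis unfolding channel_inv_def
  proof (intro conjI allI impI)
    show "card (outstanding_writes c' j i) + ws c' i j = min (ws c' j j) (ws c' j i + 1)"
      using card' recv_ws send_ws channel_inv_card[OF P] by simp
  next
    fix m b assume "write_outstanding c' j i m b"
    then consider "write_outstanding c j i m b" | "m = xz" "b = bz" using W by blast
    then show "b = (ws c' i j + 1) mod 2 \<or>
        (b = (ws c' i j + 2) mod 2 \<and> card (outstanding_writes c' j i) = 2)"
    proof cases
      case 1 then show ?thesis using old recv_ws by simp
    next
      case 2 then show ?thesis using bz recv_ws card' le by (cases "card (outstanding_writes c j i)") auto
    qed
  next
    fix m m' b assume "write_outstanding c' j i m b" and "write_outstanding c' j i m' b"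
    moreover have "\<not> write_outstanding c j i m bz" for m
    proof
      assume "write_outstanding c j i m bz"
      then have "card (outstanding_writes c j i) = 1" "bz = (ws c i j + 1) mod 2" using old by blast+
      then show False using bz by (simp add: mod_Suc split: if_split_asm)
    qed
    ultimately show "m = m'" using W channel_inv_bit_unique[OF P] by metis
  qed
qed

lemma channel_inv_remove:
  assumes P: "channel_inv c j i"
    and W: "\<And>x b. write_outstanding c' j i x b = (write_outstanding c j i x b \<and> x \<noteq> h)"
    and h: "write_outstanding c j i h ((ws c i j + 1) mod 2)" and fin: "finite (outstanding_writes c j i)"
    and recv_ws: "ws c' i j = ws c i j + 1"
    and send_ws: "min (ws c' j j) (ws c' j i + 1) = min (ws c j j) (ws c j i + 1)"
  shows "channel_inv c' j i"
proof -
  have "outstanding_writes c' j i = outstanding_writes c j i - {h}"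
    using W unfolding outstanding_writes_def by auto
  moreover have "h \<in> outstanding_writes c j i" using h unfolding outstanding_writes_def by blast
  ultimately have card': "card (outstanding_writes c' j i) + 1 = card (outstanding_writes c j i)"
    using fin
    by (metis One_nat_def Suc_pred add.commute card_Diff_singleton card_gt_0_iff empty_iff plus_1_eq_Suc)
  show ?thesis unfolding channel_inv_def
  proof (intro conjI allI impI)
    show "card (outstanding_writes c' j i) + ws c' i j = min (ws c' j j) (ws c' j i + 1)"
      using card' recv_ws send_ws channel_inv_card[OF P] by simp
  next
    fix m b assume "write_outstanding c' j i m b"
    then have m: "write_outstanding c j i m b" "m \<noteq> h" using W by blast+
    then have "b \<noteq> (ws c i j + 1) mod 2" using channel_inv_bit_unique[OF P _ h] by blast
    then have "b = (ws c i j + 2) mod 2" using channel_inv_bit[OF P m(1)] by blast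
    then show "b = (ws c' i j + 1) mod 2 \<or>
        (b = (ws c' i j + 2) mod 2 \<and> card (outstanding_writes c' j i) = 2)"
      using recv_ws by simp
  next
    fix m m' b assume "write_outstanding c' j i m b" "write_outstanding c' j i m' b"
    then show "m = m'" using W channel_inv_bit_unique[OF P] by blast
  qed
qed

lemma outstanding_writes_synced:
  assumes "channel_inv c w i" "channel_inv c i w" "ws c w i = ws c w w"
  shows "card (outstanding_writes c w i) \<le> 1"
    and "card (outstanding_writes c w i) + ws c i w = ws c w w"
  using channel_inv_card[OF assms(1)] channel_inv_card[OF assms(2)] assms(3) by simp_all

lemma sync_inv_frame:
  assumes C: "sync_inv n c"
    and W: "\<And>j i x b. write_outstanding c' j i x b = write_outstanding c j i x b"
    and ws_eq: "\<And>p q. ws c' p q = ws c p q"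
  shows "sync_inv n c'"
  unfolding sync_inv_def
proof (intro conjI allI impI)
  fix p q assume "p \<in> {1..n}" "q \<in> {1..n}"
  then show "ws c' p q \<le> ws c' p p" using sync_inv_ws_le[OF C] ws_eq by simp
next
  fix i j assume "i \<in> {1..n}" "j \<in> {1..n}" "j \<noteq> i"
  then show "channel_inv c' j i" using sync_inv_channel[OF C] channel_inv_frame W ws_eq by metis
qed

lemma sync_inv_InvWrite:
  assumes I: "wf_conf n c" and C: "sync_inv n c" and w: "w \<in> {1..n}"
    and s'_ws: "wsync s' = (wsync (loc c w))(w := ws c w w + 1)"
    and s'_pend: "pend s' = pend (loc c w)"
    and c': "c' = send n w {j \<in> {1..n}. wsync s' j = ws c w w + 1 - 1}
                (WRITE ((ws c w w + 1) mod 2) v) (upd w s' c)"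
  shows "sync_inv n c'"
proof -
  define a where "a = ws c w w"
  define L where "L = {j \<in> {1..n}. j \<noteq> w \<and> ws c w j = a}"
  have "{j \<in> {1..n}. wsync s' j = ws c w w + 1 - 1} = L" unfolding L_def a_def s'_ws by auto
  then have c'_eq: "c' = send n w L (WRITE ((a + 1) mod 2) v) (upd w s' c)" using c' a_def by simp
  have ws': "ws c' p q = (if p = w then (if q = w then a + 1 else ws c w q) else ws c p q)" for p q
    unfolding c'_eq using s'_ws a_def by simp
  have W: "write_outstanding c' j i x b \<longleftrightarrow> write_outstanding c j i x b \<or>
             (j = w \<and> i \<in> L \<and> x = cnt c + i \<and> b = (a + 1) mod 2)" for j i x b
    unfolding c'_eq write_outstanding_send_WRITE write_outstanding_upd[OF s'_pend] by simp
  show ?thesis unfolding sync_inv_def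
  proof (intro conjI allI impI)
    fix p q assume "p \<in> {1..n}" "q \<in> {1..n}"
    then show "ws c' p q \<le> ws c' p p" using sync_inv_ws_le[OF C] ws' a_def by fastforce
  next
    fix i j assume i: "i \<in> {1..n}" and j: "j \<in> {1..n}" and ji: "j \<noteq> i"
    have P: "channel_inv c j i" using sync_inv_channel[OF C i j ji] .
    consider (synced) "j = w" "i \<in> L" | (behind) "j = w" "i \<notin> L" | (other) "j \<noteq> w" by blast
    then show "channel_inv c' j i"
    proof cases
      case synced
      then have iL: "ws c w i = a" "i \<noteq> w" unfolding L_def by auto
      have "channel_inv c i w" using sync_inv_channel[OF C w i] iL(2) .
      then have cl: "card (outstanding_writes c w i) \<le> 1"
        "card (outstanding_writes c w i) + ws c i w = a"
        using outstanding_writes_synced[OF P[unfolded synced(1)]] iL a_def by auto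
      show ?thesis unfolding synced(1)
      proof (rule channel_inv_add[OF P[unfolded synced(1)], where xz = "cnt c + i"])
        show "cnt c + i \<notin> outstanding_writes c w i" using outstanding_writes_less_cnt[OF I] by fastforce
      qed (use W synced ws' iL a_def cl outstanding_writes_finite[OF I] in \<open>auto simp: add.commute\<close>)
    next
      case behind
      then have "ws c w i < a"
        using i ji sync_inv_ws_le[OF C w i] unfolding L_def a_def by fastforce
      then show ?thesis by (intro channel_inv_frame[OF P]) (use W ws' behind ji a_def in auto)
    next
      case other
      then show ?thesis by (intro channel_inv_frame[OF P]) (use W ws' in auto)
    qed
  qed
qed

text \<open>The common core of the three branches of the write handler; a branch determines the set
\<open>S\<close> of processes that receive a fresh write.\<close>

lemma sync_inv_after_handler:
  assumes I: "wf_conf n c" and C: "sync_inv n c" and i0: "i0 \<in> {1..n}"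
    and H: "(h, HW j0 b0 v0) \<in> pend (loc c i0)" and b0: "b0 = (ws c i0 j0 + 1) mod 2"
    and W: "\<And>j i x b. write_outstanding c' j i x b \<longleftrightarrow>
              (write_outstanding c j i x b \<and> \<not> (i = i0 \<and> x = h)) \<or>
              (j = i0 \<and> i \<in> S \<and> x = cnt c + i \<and> b = bb i)"
    and S: "S \<subseteq> {1..n} - {i0}"
    and others: "\<And>p q. p \<noteq> i0 \<Longrightarrow> ws c' p q = ws c p q"
    and sender: "ws c' i0 j0 = ws c i0 j0 + 1"
    and rest: "\<And>q. q \<noteq> i0 \<Longrightarrow> q \<noteq> j0 \<Longrightarrow> ws c' i0 q = ws c i0 q"
    and le: "\<And>q. q \<in> {1..n} \<Longrightarrow> ws c' i0 q \<le> ws c' i0 i0"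
    and sent_ws: "\<And>i. i \<in> S \<Longrightarrow>
        min (ws c' i0 i0) (ws c' i0 i + 1) = min (ws c i0 i0) (ws c i0 i + 1) + 1 \<and>
        bb i = (ws c i i0 + card (outstanding_writes c i0 i) + 1) mod 2 \<and>
        card (outstanding_writes c i0 i) \<le> 1"
    and unsent_ws: "\<And>i. i \<in> {1..n} \<Longrightarrow> i \<notin> S \<Longrightarrow> i \<noteq> i0 \<Longrightarrow>
        min (ws c' i0 i0) (ws c' i0 i + 1) = min (ws c i0 i0) (ws c i0 i + 1)"
  shows "sync_inv n c'"
proof -
  have j0: "j0 \<in> {1..n}" "j0 \<noteq> i0" using wf_conf_pend_HW[OF I H] by auto
  show ?thesis unfolding sync_inv_def
  proof (intro conjI allI impI)
    fix p q assume "p \<in> {1..n}" "q \<in> {1..n}"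
    then show "ws c' p q \<le> ws c' p p" using sync_inv_ws_le[OF C] others le by (cases "p = i0") auto
  next
    fix i j assume i: "i \<in> {1..n}" and j: "j \<in> {1..n}" and ji: "j \<noteq> i"
    have P: "channel_inv c j i" using sync_inv_channel[OF C i j ji] .
    consider (consumed) "i = i0" "j = j0" | (into_i0) "i = i0" "j \<noteq> j0"
      | (sent) "j = i0" "i \<in> S" | (unsent) "j = i0" "i \<notin> S" | (other) "i \<noteq> i0" "j \<noteq> i0"
      by blast
    then show "channel_inv c' j i"
    proof cases
      case consumed
      have h: "write_outstanding c j0 i0 h ((ws c i0 j0 + 1) mod 2)"
        unfolding write_outstanding_def using H b0 by blast
      show ?thesis unfolding consumed
        by (rule channel_inv_remove[OF P[unfolded consumed] _ h])
          (use W j0 sender others outstanding_writes_finite[OF I] in auto)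
    next
      case into_i0
      have "\<not> write_outstanding c j i0 h b" for b
        using write_outstanding_pending[OF I H] into_i0 by blast
      then have "write_outstanding c' j i x b = write_outstanding c j i x b" for x b
        using W into_i0 ji by auto
      then show ?thesis
        by (rule channel_inv_frame[OF P]) (use into_i0 ji rest others in auto)
    next
      case sent
      have "i \<noteq> i0" using sent S by auto
      have "write_outstanding c' i0 i x b =
              (write_outstanding c i0 i x b \<or> (x = cnt c + i \<and> b = bb i))" for x b
        using W sent \<open>i \<noteq> i0\<close> by auto
      then show ?thesis unfolding sent(1)
      proof (rule channel_inv_add[OF P[unfolded sent(1)]])
        show "cnt c + i \<notin> outstanding_writes c i0 i"
          using outstanding_writes_less_cnt[OF I] by fastforce
      qed (use sent_ws[OF sent(2)] others \<open>i \<noteq> i0\<close> outstanding_writes_finite[OF I] in auto)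
    next
      case unsent
      have "write_outstanding c' j i x b = write_outstanding c j i x b" for x b
        using W unsent ji by auto
      then show ?thesis
        by (rule channel_inv_frame[OF P]) (use others unsent_ws[OF i] unsent ji in auto)
    next
      case other
      then show ?thesis by (intro channel_inv_frame[OF P]) (use W others in auto)
    qed
  qed
qed

context
  fixes n :: nat and c :: "'v conf" and i0 h j0 b0 and v0 :: 'v
  assumes I: "wf_conf n c" and C: "sync_inv n c" and i0: "i0 \<in> {1..n}"
    and H: "(h, HW j0 b0 v0) \<in> pend (loc c i0)" and b0: "b0 = (ws c i0 j0 + 1) mod 2"
begin

lemma sync_inv_runW_adopt:
  assumes synced: "ws c i0 j0 = ws c i0 i0"
  shows "sync_inv n (runW n i0 j0 v0 (drop_handler i0 h (HW j0 b0 v0) c))"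
    (is "sync_inv n ?c'")
proof -
  have j0: "j0 \<in> {1..n}" "j0 \<noteq> i0" using wf_conf_pend_HW[OF I H] by auto
  define a where "a = ws c i0 i0"
  define L where "L = {l \<in> {1..n}. l \<noteq> i0 \<and> ws c i0 l = a}"
  note c'_eq = runW_adopt[OF j0(2), of "drop_handler i0 h (HW j0 b0 v0) c",
      unfolded drop_handler_simps]
  have ws': "ws ?c' p q = (if p = i0 then ((ws c i0)(i0 := a + 1, j0 := a + 1)) q else ws c p q)"
    for p q unfolding c'_eq[OF synced] a_def by simp
  have "j0 \<in> L" using j0 synced unfolding L_def a_def by simp
  show ?thesis
  proof (rule sync_inv_after_handler[OF I C i0 H b0, where S = L and bb = "\<lambda>_. (a + 1) mod 2"])
    show "write_outstanding ?c' j i x b \<longleftrightarrow> (write_outstanding c j i x b \<and> \<not> (i = i0 \<and> x = h)) \<or>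
        (j = i0 \<and> i \<in> L \<and> x = cnt c + i \<and> b = (a + 1) mod 2)" for j i x b
      unfolding c'_eq[OF synced] write_outstanding_send_WRITE write_outstanding_upd[OF refl]
      by (simp add: write_outstanding_upd write_outstanding_drop_handler[OF I H] L_def a_def)
  next
    fix i assume "i \<in> L"
    then have i: "i \<in> {1..n}" "i \<noteq> i0" "ws c i0 i = a" unfolding L_def by auto
    have "card (outstanding_writes c i0 i) \<le> 1"
      "card (outstanding_writes c i0 i) + ws c i i0 = ws c i0 i0"
      using outstanding_writes_synced[OF sync_inv_channel[OF C i(1) i0 i(2)[symmetric]]
          sync_inv_channel[OF C i0 i(1) i(2)]] i a_def by auto
    then show "min (ws ?c' i0 i0) (ws ?c' i0 i + 1) = min (ws c i0 i0) (ws c i0 i + 1) + 1 \<and>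
        (a + 1) mod 2 = (ws c i i0 + card (outstanding_writes c i0 i) + 1) mod 2 \<and>
        card (outstanding_writes c i0 i) \<le> 1"
      using ws' i a_def j0 by (simp add: add.commute)
  next
    fix i assume i: "i \<in> {1..n}" "i \<notin> L" "i \<noteq> i0"
    then have "ws c i0 i < a" "i \<noteq> j0"
      using sync_inv_ws_le[OF C i0 i(1)] \<open>j0 \<in> L\<close> unfolding L_def a_def by auto
    then show "min (ws ?c' i0 i0) (ws ?c' i0 i + 1) = min (ws c i0 i0) (ws c i0 i + 1)"
      using ws' i a_def j0 by simp
  next
    fix q assume "q \<in> {1..n}"
    then show "ws ?c' i0 q \<le> ws ?c' i0 i0" using sync_inv_ws_le[OF C i0 \<open>q \<in> {1..n}\<close>] ws' a_def j0 by simp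
  qed (use ws' L_def synced a_def j0 in auto)
qed

lemma sync_inv_runW_reply:
  assumes behind: "ws c i0 j0 + 1 < ws c i0 i0"
  shows "sync_inv n (runW n i0 j0 v0 (drop_handler i0 h (HW j0 b0 v0) c))"
    (is "sync_inv n ?c'")
proof -
  have j0: "j0 \<in> {1..n}" "j0 \<noteq> i0" using wf_conf_pend_HW[OF I H] by auto
  define y where "y = ws c i0 j0"
  note c'_eq = runW_reply[OF j0(2), of "drop_handler i0 h (HW j0 b0 v0) c",
      unfolded drop_handler_simps]
  have ws': "ws ?c' p q = (if p = i0 then ((ws c i0)(j0 := y + 1)) q else ws c p q)" for p q
    unfolding c'_eq[OF behind] y_def by simp
  have "write_outstanding c j0 i0 h b0" unfolding write_outstanding_def using H by blast
  then have "1 \<le> card (outstanding_writes c j0 i0)" by (rule card_outstanding_writes_pos[OF I])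
  then have "y \<le> ws c j0 i0"
    using channel_inv_card[OF sync_inv_channel[OF C i0 j0(1) j0(2)]] y_def by simp
  moreover have "card (outstanding_writes c i0 j0) + ws c j0 i0 = y + 1"
    using channel_inv_card[OF sync_inv_channel[OF C j0(1) i0 j0(2)[symmetric]]] behind y_def
    by simp
  ultimately have sent: "(y + 2) mod 2 = (ws c j0 i0 + card (outstanding_writes c i0 j0) + 1) mod 2"
    "card (outstanding_writes c i0 j0) \<le> 1"
    by (simp_all add: add.commute)
  show ?thesis
  proof (rule sync_inv_after_handler[OF I C i0 H b0, where S = "{j0}" and bb = "\<lambda>_. (y + 2) mod 2"])
    show "write_outstanding ?c' j i x b \<longleftrightarrow> (write_outstanding c j i x b \<and> \<not> (i = i0 \<and> x = h)) \<or>
        (j = i0 \<and> i \<in> {j0} \<and> x = cnt c + i \<and> b = (y + 2) mod 2)" for j i x b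
      unfolding c'_eq[OF behind] write_outstanding_send_WRITE
      by (simp add: write_outstanding_upd write_outstanding_drop_handler[OF I H] y_def)
  qed (use ws' j0 behind sent sync_inv_ws_le[OF C i0] y_def in auto)
qed

lemma sync_inv_runW_record:
  assumes "ws c i0 j0 \<noteq> ws c i0 i0" and "\<not> ws c i0 j0 + 1 < ws c i0 i0"
  shows "sync_inv n (runW n i0 j0 v0 (drop_handler i0 h (HW j0 b0 v0) c))"
    (is "sync_inv n ?c'")
proof -
  have j0: "j0 \<in> {1..n}" "j0 \<noteq> i0" using wf_conf_pend_HW[OF I H] by auto
  have caught_up: "ws c i0 j0 + 1 = ws c i0 i0"
    using assms sync_inv_ws_le[OF C i0 j0(1)] by simp
  note c'_eq = runW_record[OF j0(2), of "drop_handler i0 h (HW j0 b0 v0) c",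
      unfolded drop_handler_simps]
  have ws': "ws ?c' p q = (if p = i0 then ((ws c i0)(j0 := ws c i0 i0)) q else ws c p q)" for p q
    unfolding c'_eq[OF assms] using caught_up by simp
  show ?thesis
  proof (rule sync_inv_after_handler[OF I C i0 H b0, where S = "{}" and bb = "\<lambda>_. 0"])
    show "write_outstanding ?c' j i x b \<longleftrightarrow> (write_outstanding c j i x b \<and> \<not> (i = i0 \<and> x = h)) \<or>
        (j = i0 \<and> i \<in> {} \<and> x = cnt c + i \<and> b = 0)" for j i x b
      unfolding c'_eq[OF assms] by (simp add: write_outstanding_upd write_outstanding_drop_handler[OF I H])
  qed (use ws' j0 caught_up sync_inv_ws_le[OF C i0] in auto)
qed

lemma sync_inv_runW: "sync_inv n (runW n i0 j0 v0 (drop_handler i0 h (HW j0 b0 v0) c))"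
  using sync_inv_runW_adopt sync_inv_runW_reply sync_inv_runW_record by blast

end

lemma step_sync_inv:
  assumes st: "step n t w c a c'" and w: "w \<in> {1..n}" and I: "wf_conf n c" and C: "sync_inv n c"
  shows "sync_inv n c'"
proof (cases a)
  case (InvWrite v)
  let ?s' = "(loc c w)\<lparr>wsync := (wsync (loc c w))(w := ws c w w + 1),
      hist := (hist (loc c w))(ws c w w + 1 := v), ost := Writing (ws c w w + 1)\<rparr>"
  have "c' = send n w {j \<in> {1..n}. wsync ?s' j = ws c w w + 1 - 1}
              (WRITE ((ws c w w + 1) mod 2) v) (upd w ?s' c)"
    using st InvWrite unfolding step_def Let_def by simp
  then show ?thesis by (rule sync_inv_InvWrite[OF I C w, rotated -1]) simp_all
next
  case (InvRead i)
  let ?s' = "(loc c i)\<lparr>rsync := (rsync (loc c i))(i := rsync (loc c i) i + 1),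
      ost := RdWait1 (rsync (loc c i) i + 1)\<rparr>"
  have "c' = send n i {j \<in> {1..n}. j \<noteq> i} READ (upd i ?s' c)"
    using st InvRead unfolding step_def Let_def by simp
  then show ?thesis
    by (auto intro: sync_inv_frame[OF C] simp: write_outstanding_send_other write_outstanding_upd)
next
  case (Deliver mid)
  from st[unfolded Deliver] show ?thesis
  proof (cases rule: step_DeliverE)
    case (1 src dst m)
    have "ws c' p q = ws c p q" for p q unfolding 1(2) recv_def Let_def by (cases m) simp_all
    then show ?thesis by (rule sync_inv_frame[OF C, rotated]) (simp add: 1 write_outstanding_recv)
  qed
next
  case (RunH i h)
  from st[unfolded RunH] show ?thesis
  proof (cases rule: step_RunHE)
    case (HW j b v)
    then show ?thesis using sync_inv_runW[OF I C] by simp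
  next
    case (HR j sn)
    have "\<not> write_outstanding c j' i h b" for j' b
      using write_outstanding_pending[OF I HR(3)] by blast
    then have "write_outstanding c' j' i' x b = write_outstanding c j' i' x b" for j' i' x b
      unfolding HR(5) by (auto simp: write_outstanding_send_other write_outstanding_drop_handler[OF I HR(3)])
    then show ?thesis by (rule sync_inv_frame[OF C]) (simp add: HR(5))
  qed
qed (use st in \<open>auto simp: step_def intro!: sync_inv_frame[OF C] write_outstanding_upd
      write_outstanding_crash\<close>)

section \<open>Single steps\<close>

lemma step_keeps_pending:
  assumes st: "step n t w c a c'" and x: "(x, hx) \<in> pend (loc c p)" and a: "a \<noteq> RunH p x"
  shows "(x, hx) \<in> pend (loc c' p)"
proof (cases a)
  case (RunH i h)
  from st[unfolded RunH] show ?thesis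
    by (cases rule: step_RunHE) (use x a RunH in \<open>auto simp: runW_pend drop_handler_def\<close>)
next
  case (Deliver mid)
  from st[unfolded Deliver] show ?thesis
    by (cases rule: step_DeliverE) (use x in \<open>auto simp: recv_def Let_def split: msg.split\<close>)
qed (use st x in \<open>auto simp: step_def Let_def\<close>)

lemma step_keeps_in_transit:
  assumes st: "step n t w c a c'" and x: "(m, y) \<in> net c" and a: "a \<noteq> Deliver m"
  shows "(m, y) \<in> net c'"
proof (cases a)
  case (RunH i h)
  have "(m, y) \<in> net (runW n i j v c0)" if "(m, y) \<in> net c0" for j v c0
    using that unfolding runW_def Let_def by auto
  with st[unfolded RunH] show ?thesis
    by (cases rule: step_RunHE) (use x in \<open>auto simp: drop_handler_def\<close>)
next
  case (Deliver mid)
  from st[unfolded Deliver] show ?thesis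
    by (cases rule: step_DeliverE) (use x a Deliver in \<open>auto simp: recv_def Let_def split: msg.split\<close>)
qed (use st x in \<open>auto simp: step_def Let_def\<close>)

lemma step_Deliver_WRITE:
  assumes st: "step n t w c (Deliver m) c'" and I: "wf_conf n c"
    and M: "(m, j, i, WRITE b v) \<in> net c"
  shows "(m, HW j b v) \<in> pend (loc c' i)"
  using st
proof (cases rule: step_DeliverE)
  case (1 src dst mm)
  then have "(src, dst, mm) = (j, i, WRITE b v)" using wf_conf_net_unique[OF I _ M] by blast
  then show ?thesis using 1 by (auto simp: recv_def Let_def)
qed

lemma step_RunH_HW_ws:
  assumes st: "step n t w c (RunH i h) c'" and I: "wf_conf n c"
    and H: "(h, HW j b v) \<in> pend (loc c i)"
  shows "ws c' i j = ws c i j + 1"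
  using st
proof (cases rule: step_RunHE)
  case (HW j' b' v')
  then have "HW j' b' v' = HW j b v" using wf_conf_pend_unique[OF I _ H] by blast
  then show ?thesis using HW wf_conf_pend_HW[OF I H] by (simp add: runW_ws(1))
next
  case (HR j' sn)
  then show ?thesis using wf_conf_pend_unique[OF I _ H] by blast
qed

lemma step_ws:
  assumes st: "step n t w c a c'" and I: "wf_conf n c" and ji: "j \<noteq> i"
  shows "ws c' i j = ws c i j \<or>
    (\<exists>h' v'. a = RunH i h' \<and> (h', HW j ((ws c i j + 1) mod 2) v') \<in> pend (loc c i) \<and>
       ws c' i j = ws c i j + 1)"
proof (cases a)
  case (RunH i' h')
  from st[unfolded RunH] show ?thesis
  proof (cases rule: step_RunHE)
    case (HW j' b' v')
    have "j' \<noteq> i'" using wf_conf_pend_HW[OF I HW(3)] by blast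
    show ?thesis
    proof (cases "i' = i \<and> j' = j")
      case True
      then show ?thesis using HW RunH \<open>j' \<noteq> i'\<close> by (auto simp: runW_ws(1))
    next
      case False
      then have "ws c' i j = ws c i j"
        using HW(5) \<open>j' \<noteq> i'\<close> ji by (cases "i' = i") (simp_all add: runW_ws)
      then show ?thesis ..
    qed
  qed simp
next
  case (Deliver mid)
  from st[unfolded Deliver] show ?thesis
    by (cases rule: step_DeliverE) (auto simp: recv_def Let_def split: msg.split)
qed (use st ji in \<open>auto simp: step_def Let_def\<close>)

lemma step_keeps_expected_handler:
  assumes st: "step n t w c a c'" and I: "wf_conf n c" and C: "sync_inv n c" and i: "i \<in> {1..n}"
    and H: "(h, HW j b v) \<in> pend (loc c i)" and b: "b = (ws c i j + 1) mod 2"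
    and a: "a \<noteq> RunH i h"
  shows "(h, HW j b v) \<in> pend (loc c' i) \<and> ws c' i j = ws c i j"
proof
  show "(h, HW j b v) \<in> pend (loc c' i)" using step_keeps_pending[OF st H a] .
  have j: "j \<in> {1..n}" "j \<noteq> i" using wf_conf_pend_HW[OF I H] by auto
  show "ws c' i j = ws c i j"
  proof (rule ccontr)
    assume "ws c' i j \<noteq> ws c i j"
    then obtain h' v' where a': "a = RunH i h'" and H': "(h', HW j b v') \<in> pend (loc c i)"
      using step_ws[OF st I j(2)] b by blast
    have "write_outstanding c j i h b" "write_outstanding c j i h' b"
      unfolding write_outstanding_def using H H' by blast+
    then have "h' = h" using channel_inv_bit_unique[OF sync_inv_channel[OF C i j]] by blast
    then show False using a a' by simp
  qed
qed

lemma enabled_RunH: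
  assumes "i \<in> {1..n}" "i \<notin> crashed c" "(h, HW j b v) \<in> pend (loc c i)"
    and "b = (ws c i j + 1) mod 2"
  shows "enabled n t w c (RunH i h)"
  unfolding enabled_def step_def Let_def using assms
  by (intro exI[of _ "runW n i j v (drop_handler i h (HW j b v) c)"]) (auto simp: drop_handler_def)

section \<open>Runs\<close>

lemma init_conf_invariants:
  assumes "init_conf v0 c"
  shows "wf_conf n c" and "sync_inv n c"
proof -
  have net: "net c = {}" and pend: "pend (loc c p) = {}" and ws: "wsync (loc c p) = (\<lambda>_. 0)" for p
    using assms unfolding init_conf_def by auto
  show "wf_conf n c" by (rule wf_confI) (simp_all add: net pend)
  have none: "\<not> write_outstanding c j i x b" for j i x b
    unfolding write_outstanding_def by (simp add: net pend)
  then have "outstanding_writes c j i = {}" for j i unfolding outstanding_writes_def by simp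
  with none show "sync_inv n c" unfolding sync_inv_def channel_inv_def by (simp add: ws)
qed

lemma run_step: "run n t w v0 \<rho> \<sigma> \<Longrightarrow> step n t w (\<rho> k) (\<sigma> k) (\<rho> (Suc k))"
  unfolding run_def by blast

lemma run_invariants:
  assumes R: "run n t w v0 \<rho> \<sigma>" and w: "w \<in> {1..n}"
  shows "wf_conf n (\<rho> k) \<and> sync_inv n (\<rho> k)"
proof (induction k)
  case 0
  have "init_conf v0 (\<rho> 0)" using R unfolding run_def by blast
  then show ?case using init_conf_invariants[of v0 "\<rho> 0" n] by blast
next
  case (Suc k)
  then show ?case using step_wf_conf[OF run_step[OF R] w] step_sync_inv[OF run_step[OF R] w] by blast
qed

context
  fixes n t w :: nat and v0 :: 'v and \<rho> :: "nat \<Rightarrow> 'v conf" and \<sigma> :: "nat \<Rightarrow> 'v act"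
  assumes R: "run n t w v0 \<rho> \<sigma>" and w: "w \<in> {1..n}"
begin

lemma run_wf_conf: "wf_conf n (\<rho> k)" and run_sync_inv: "sync_inv n (\<rho> k)"
  using run_invariants[OF R w] by blast+

lemma run_keeps_pending:
  assumes "(h, hx) \<in> pend (loc (\<rho> k) i)" and "k \<le> k'"
    and "\<And>k''. k \<le> k'' \<Longrightarrow> k'' < k' \<Longrightarrow> \<sigma> k'' \<noteq> RunH i h"
  shows "(h, hx) \<in> pend (loc (\<rho> k') i)"
  using assms(2)
proof (induction k' rule: dec_induct)
  case base show ?case by (rule assms(1))
next
  case (step k'')
  then have "\<sigma> k'' \<noteq> RunH i h" using assms(3) by simp
  with step.IH show ?case by (rule step_keeps_pending[OF run_step[OF R]])
qed

lemma run_keeps_in_transit: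
  assumes "(m, y) \<in> net (\<rho> k)" and "k \<le> k'"
    and "\<And>k''. k \<le> k'' \<Longrightarrow> k'' < k' \<Longrightarrow> \<sigma> k'' \<noteq> Deliver m"
  shows "(m, y) \<in> net (\<rho> k')"
  using assms(2)
proof (induction k' rule: dec_induct)
  case base show ?case by (rule assms(1))
next
  case (step k'')
  then have "\<sigma> k'' \<noteq> Deliver m" using assms(3) by simp
  with step.IH show ?case by (rule step_keeps_in_transit[OF run_step[OF R]])
qed

lemma run_keeps_expected_handler:
  assumes i: "i \<in> {1..n}" and H: "(h, HW j b v) \<in> pend (loc (\<rho> k) i)"
    and b: "b = (ws (\<rho> k) i j + 1) mod 2" and "k \<le> k'"
    and "\<And>k''. k \<le> k'' \<Longrightarrow> k'' < k' \<Longrightarrow> \<sigma> k'' \<noteq> RunH i h"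
  shows "(h, HW j b v) \<in> pend (loc (\<rho> k') i) \<and> ws (\<rho> k') i j = ws (\<rho> k) i j"
  using assms(4)
proof (induction k' rule: dec_induct)
  case base show ?case using H by simp
next
  case (step k'')
  have no_run: "\<sigma> k'' \<noteq> RunH i h" using assms(5) step.hyps by simp
  have H'': "(h, HW j b v) \<in> pend (loc (\<rho> k'') i)" and same: "ws (\<rho> k'') i j = ws (\<rho> k) i j"
    using step.IH by blast+
  have "b = (ws (\<rho> k'') i j + 1) mod 2" using b same by simp
  from step_keeps_expected_handler[OF run_step[OF R] run_wf_conf run_sync_inv i H'' this no_run]
  show ?case using same by simp
qed

text \<open>Weak fairness: the handler stays enabled as long as it does not run.\<close>

lemma expected_handler_runs:
  assumes cor: "correct n \<rho> i" and H: "(h, HW j b v) \<in> pend (loc (\<rho> k) i)"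
    and b: "b = (ws (\<rho> k) i j + 1) mod 2"
  shows "\<exists>k' \<ge> k. \<sigma> k' = RunH i h \<and> (h, HW j b v) \<in> pend (loc (\<rho> k') i) \<and>
           ws (\<rho> k') i j = ws (\<rho> k) i j"
proof -
  have i: "i \<in> {1..n}" and alive: "i \<notin> crashed (\<rho> k')" for k'
    using cor unfolding correct_def by auto
  note keeps = run_keeps_expected_handler[OF i H b]
  have "\<exists>k' \<ge> k. \<sigma> k' = RunH i h"
  proof (rule ccontr)
    assume never: "\<not> (\<exists>k' \<ge> k. \<sigma> k' = RunH i h)"
    have "enabled n t w (\<rho> k') (RunH i h)" if "k' \<ge> k" for k'
      using keeps[OF that] never b by (auto intro!: enabled_RunH[OF i alive, where j = j and v = v])
    moreover have "local_act w i (RunH i h)" unfolding local_act_def by blast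
    ultimately have "\<exists>k' \<ge> k. \<sigma> k' = RunH i h" using R cor unfolding run_def by blast
    with never show False ..
  qed
  then obtain k' where "k \<le> k'" "\<sigma> k' = RunH i h" "\<And>k''. k \<le> k'' \<Longrightarrow> k'' < k' \<Longrightarrow> \<sigma> k'' \<noteq> RunH i h"
    by (rule ex_least_nat_ge) blast
  then show ?thesis using keeps by blast
qed

lemma expected_write_changes_ws:
  assumes cor: "correct n \<rho> i" and W: "write_outstanding (\<rho> k) j i m ((ws (\<rho> k) i j + 1) mod 2)"
  shows "\<exists>k' \<ge> k. ws (\<rho> k') i j \<noteq> ws (\<rho> k) i j"
proof -
  have pending: "\<exists>k' \<ge> k0. ws (\<rho> k') i j \<noteq> ws (\<rho> k0) i j"
    if H0: "(m, HW j ((ws (\<rho> k0) i j + 1) mod 2) v) \<in> pend (loc (\<rho> k0) i)" for k0 v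
  proof -
    obtain k' where "k' \<ge> k0" "\<sigma> k' = RunH i m"
      and "(m, HW j ((ws (\<rho> k0) i j + 1) mod 2) v) \<in> pend (loc (\<rho> k') i)"
      and "ws (\<rho> k') i j = ws (\<rho> k0) i j"
      using expected_handler_runs[OF cor H0] by blast
    then have "ws (\<rho> (Suc k')) i j \<noteq> ws (\<rho> k0) i j"
      using step_RunH_HW_ws[OF _ run_wf_conf] run_step[OF R, of k'] by simp
    then show ?thesis using \<open>k' \<ge> k0\<close> le_SucI by blast
  qed
  from W consider v where "(m, j, i, WRITE ((ws (\<rho> k) i j + 1) mod 2) v) \<in> net (\<rho> k)"
    | v where "(m, HW j ((ws (\<rho> k) i j + 1) mod 2) v) \<in> pend (loc (\<rho> k) i)"
    unfolding write_outstanding_def by blast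
  then show ?thesis
  proof cases
    case (1 v)
    show ?thesis
    proof (rule ccontr)
      assume "\<not> ?thesis"
      then have same: "ws (\<rho> k') i j = ws (\<rho> k) i j" if "k' \<ge> k" for k' using that by blast
      have "\<exists>k' \<ge> k. \<sigma> k' = Deliver m" using R cor 1 unfolding run_def by blast
      then obtain k2 where k2: "k \<le> k2" "\<sigma> k2 = Deliver m"
        and "\<And>k''. k \<le> k'' \<Longrightarrow> k'' < k2 \<Longrightarrow> \<sigma> k'' \<noteq> Deliver m"
        by (rule ex_least_nat_ge) blast
      then have "(m, j, i, WRITE ((ws (\<rho> k) i j + 1) mod 2) v) \<in> net (\<rho> k2)"
        using run_keeps_in_transit[OF 1] by blast
      then have "(m, HW j ((ws (\<rho> (Suc k2)) i j + 1) mod 2) v) \<in> pend (loc (\<rho> (Suc k2)) i)"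
        using step_Deliver_WRITE[OF _ run_wf_conf] run_step[OF R, of k2] k2 same[of "Suc k2"] by simp
      then obtain k' where "k' \<ge> Suc k2" "ws (\<rho> k') i j \<noteq> ws (\<rho> (Suc k2)) i j"
        using pending by blast
      then show False using same[of k'] same[of "Suc k2"] k2(1) by simp
    qed
  next
    case (2 v)
    then show ?thesis by (rule pending)
  qed
qed

lemma ws_change_increments:
  assumes ji: "j \<noteq> i" and change: "\<exists>k' \<ge> k. ws (\<rho> k') i j \<noteq> ws (\<rho> k) i j"
  shows "\<exists>k' \<ge> k. ws (\<rho> k') i j = ws (\<rho> k) i j + 1"
proof -
  obtain k1 where k1: "k \<le> k1" "ws (\<rho> k1) i j \<noteq> ws (\<rho> k) i j"
    and before: "\<And>k''. k \<le> k'' \<Longrightarrow> k'' < k1 \<Longrightarrow> ws (\<rho> k'') i j = ws (\<rho> k) i j"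
    using change by (rule ex_least_nat_ge) blast
  have "k1 \<noteq> k" using k1(2) by blast
  with k1(1) have k0: "k1 = Suc (k1 - 1)" "k \<le> k1 - 1" by simp_all
  have same: "ws (\<rho> (k1 - 1)) i j = ws (\<rho> k) i j" using before[of "k1 - 1"] k0 by linarith
  with k1(2) k0(1) have "ws (\<rho> (Suc (k1 - 1))) i j \<noteq> ws (\<rho> (k1 - 1)) i j" by simp
  then have "ws (\<rho> (Suc (k1 - 1))) i j = ws (\<rho> (k1 - 1)) i j + 1"
    using step_ws[OF run_step[OF R] run_wf_conf ji, of "k1 - 1"] by blast
  with same k0(1) k1(1) show ?thesis by (metis)
qed

lemma handler_bit_becomes_expected:
  assumes cor: "correct n \<rho> i" and H: "(h, HW j b v) \<in> pend (loc (\<rho> k) i)"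
  shows "\<exists>k1 \<ge> k. b = (ws (\<rho> k1) i j + 1) mod 2"
proof (cases "b = (ws (\<rho> k) i j + 1) mod 2")
  case False
  have i: "i \<in> {1..n}" using cor unfolding correct_def by blast
  have j: "j \<in> {1..n}" "j \<noteq> i" using wf_conf_pend_HW[OF run_wf_conf H] by auto
  have W: "write_outstanding (\<rho> k) j i h b" unfolding write_outstanding_def using H by blast
  note P = sync_inv_channel[OF run_sync_inv i j]
  obtain m where "write_outstanding (\<rho> k) j i m ((ws (\<rho> k) i j + 1) mod 2)"
    using channel_inv_other_write(2)[OF P W False] by blast
  then obtain k1 where "k \<le> k1" "ws (\<rho> k1) i j = ws (\<rho> k) i j + 1"
    using ws_change_increments[OF j(2) expected_write_changes_ws[OF cor]] by blast
  moreover have "b = (ws (\<rho> k) i j + 2) mod 2" using channel_inv_other_write(1)[OF P W False] .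
  ultimately show ?thesis by auto
qed blast

end

theorem lemma7:
  fixes n t w :: nat and v0 :: 'v and \<rho> :: "nat \<Rightarrow> 'v conf" and \<sigma> :: "nat \<Rightarrow> 'v act"
  assumes "2 * t < n" and "w \<in> {1..n}"
    and "run n t w v0 \<rho> \<sigma>"
    and "correct n \<rho> i"
    and "(h, HW j b v) \<in> pend (loc (\<rho> k) i)"
  shows "\<exists>k' \<ge> k. \<sigma> k' = RunH i h"
proof -
  note R = assms(3) and w = assms(2) and cor = assms(4) and H = assms(5)
  obtain k1 where "k \<le> k1" and b: "b = (ws (\<rho> k1) i j + 1) mod 2"
    using handler_bit_becomes_expected[OF R w cor H] by blast
  show ?thesis
  proof (cases "\<exists>k'. k \<le> k' \<and> k' < k1 \<and> \<sigma> k' = RunH i h")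
    case False
    then have "(h, HW j b v) \<in> pend (loc (\<rho> k1) i)"
      using run_keeps_pending[OF R w H \<open>k \<le> k1\<close>] by blast
    then obtain k' where "k' \<ge> k1" "\<sigma> k' = RunH i h"
      using expected_handler_runs[OF R w cor _ b] by blast
    with \<open>k \<le> k1\<close> show ?thesis by (blast intro: order_trans)
  qed auto
qed

end
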